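(* Consider the continuous Bomber Problem described in the context, with parameter $v\in(0,1]$, and let $u=1-v\in[0,1)$. For $u\in(0,1)$ and $t>0$ define $$f_u(t)=\log\left[1+\frac{u}{e^{tu}-1}\right],$$ and for $u=0$ define $f_0(t)=\lim_{u\to 0}f_u(t)=\log(1+t^{-1})$. For $u\in[0,1)$ and $t>0$ define $g_u(t)=\log(1+t^{-1}-u)$. Let $t>0$. If one of the following holds: (i) $u=0$; (ii) $u\in(0,1/2)$ and $t\ge u^{-1}\log(2v)$; (iii) $u\in[1/2,1)$, then for $x>0$: $K(x,t)=x$ if and only if $x\le f_u(t)$. In the remaining case, where $u\in(0,1/2)$ and $t<u^{-1}\log(2v)$, we have: $K(x,t)=x$ if $x\le g_u(t)$, and $K(x,t)<x$ if $x>f_u(t)$.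
   Context: The Bomber Problem: a bomber holding an amount $x\ge 0$ of (continuously divisible) ammunition must survive for a remaining time $t\ge 0$ ("time" means time remaining). Enemies arrive according to a time-homogeneous Poisson process of rate 1. Upon meeting an enemy, the bomber chooses an amount $y\in[0,x]$ of its current ammunition to fire; the enemy survives this with probability $e^{-y}$, and if it survives it destroys the bomber with probability $v\in(0,1]$ (fixed, known). Thus the bomber survives an encounter in which it spends $y$ with probability $a(y)=1-ve^{-y}$, and continues with ammunition $x-y$. $P(x,t)$ denotes the optimal (maximal over strategies) probability that the bomber survives for time $t$ starting with ammunition $x$; $H(x,t)$ denotes the optimal conditional probability of survival given that an enemy is encountered at time (remaining) $t$ while holding ammunition $x$; and $K(x,t)\in[0,x]$ denotes the optimal amount of ammunition to fire at that enemy, so that $H(x,t)=a(K(x,t))P(x-K(x,t),t)$. *)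

theory Defs
  imports "HOL-Analysis.Analysis"
begin

text \<open>Continuous Bomber Problem, enemy arrivals Poisson of rate 1, kill parameter v.
  Survival probability of an encounter in which amount y is fired.\<close>
definition bomb_a :: "real \<Rightarrow> real \<Rightarrow> real" where
  "bomb_a v y = 1 - v * exp (- y)"

text \<open>bomb_V v n x t: optimal probability of surviving for remaining time t, starting with
  ammunition x, on the event that at most n enemies are met (dynamic programming on the
  time s elapsed until the first enemy arrives, which has density exp(-s)).\<close>
primrec bomb_V :: "real \<Rightarrow> nat \<Rightarrow> real \<Rightarrow> real \<Rightarrow> real" where
  "bomb_V v 0 x t = exp (- t)"
| "bomb_V v (Suc n) x t = exp (- t) +
     integral {0..t} (\<lambda>s. exp (- s) *
        (SUP y\<in>{0..x}. bomb_a v y * bomb_V v n (x - y) (t - s)))"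

text \<open>Optimal survival probability P(x,t) (limit of the increasing sequence bomb_V).\<close>
definition bomb_P :: "real \<Rightarrow> real \<Rightarrow> real \<Rightarrow> real" where
  "bomb_P v x t = (SUP n. bomb_V v n x t)"

definition bomb_H :: "real \<Rightarrow> real \<Rightarrow> real \<Rightarrow> real" where
  "bomb_H v x t = (SUP y\<in>{0..x}. bomb_a v y * bomb_P v (x - y) t)"

definition bomb_K :: "real \<Rightarrow> real \<Rightarrow> real \<Rightarrow> real set" where
  "bomb_K v x t = {y \<in> {0..x}. bomb_a v y * bomb_P v (x - y) t = bomb_H v x t}"

definition bomb_f :: "real \<Rightarrow> real \<Rightarrow> real" where
  "bomb_f u t = (if u = 0 then ln (1 + 1 / t) else ln (1 + u / (exp (t * u) - 1)))"

definition bomb_g :: "real \<Rightarrow> real \<Rightarrow> real" where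
  "bomb_g u t = ln (1 + 1 / t - u)"

end

theory Submission
  imports Defs
begin

text \<open>Let \<open>u = 1 - v\<close> and let \<open>R(t)\<close> be the integral of \<open>exp (u s)\<close> over \<open>[0, t]\<close>, so
  that \<open>f\<^sub>u(t) = ln (1 + 1 / R(t))\<close>. Firing all of \<open>x\<close> at the first enemy survives with
  probability \<open>exp (- t) (1 + a(x) R(t))\<close>, a lower bound for \<open>P(x, t)\<close>. On the region
  \<open>exp x R(t) \<le> 1 + R(t)\<close>, i.e. \<open>x \<le> f\<^sub>u(t)\<close>, an explicit identity shows that splitting \<open>x\<close>
  into a shot \<open>y\<close> and a reserve \<open>x - y\<close> never beats firing everything; by induction on the
  number of encounters the fire-all value therefore also bounds every finite-horizon value from
  above, so it equals \<open>P\<close> there and firing all of \<open>x\<close> is the unique optimum. Beyond the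
  threshold some split is strictly better than firing everything, and by continuity an optimal
  amount exists, necessarily below \<open>x\<close>. So \<open>f\<^sub>u\<close> is the exact threshold in every case, and the
  statement with \<open>g\<^sub>u\<close> follows from \<open>g\<^sub>u \<le> f\<^sub>u\<close>.\<close>

lemma has_integral_exp_neg:
  fixes a b :: real
  assumes "a \<le> b"
  shows "((\<lambda>s. exp (- s)) has_integral (exp (- a) - exp (- b))) {a..b}"
proof -
  have "\<And>x. ((\<lambda>s. - exp (- s)) has_real_derivative exp (- x)) (at x within {a..b})"
    by (auto intro!: derivative_eq_intros)
  then have "((\<lambda>s. exp (- s)) has_integral (- exp (- b) - - exp (- a))) {a..b}"
    using assms
    by (intro fundamental_theorem_of_calculus) (auto simp: has_real_derivative_iff_has_vector_derivative)
  then show ?thesis by simp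
qed

lemma integral_exp_neg_weighted_le:
  fixes G :: "real \<Rightarrow> real"
  assumes "a \<le> b" and "(\<lambda>s. exp (- s) * G s) integrable_on {a..b}"
    and "\<And>s. a \<le> s \<Longrightarrow> s \<le> b \<Longrightarrow> G s \<le> 1"
  shows "integral {a..b} (\<lambda>s. exp (- s) * G s) \<le> exp (- a) - exp (- b)"
proof -
  have "integral {a..b} (\<lambda>s. exp (- s) * G s) \<le> integral {a..b} (\<lambda>s. exp (- s))"
    using assms
    by (intro integral_le[OF assms(2) integrable_continuous_interval] continuous_intros)
      (auto intro: mult_left_le)
  also have "\<dots> = exp (- a) - exp (- b)"
    using has_integral_exp_neg[OF \<open>a \<le> b\<close>] by (rule integral_unique)
  finally show ?thesis .
qed

lemma antimono_exp_neg_weighted_integrable: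
  fixes G :: "real \<Rightarrow> real"
  assumes anti: "antimono_on {0..t} G" and nonneg: "\<And>r. 0 \<le> r \<Longrightarrow> r \<le> t \<Longrightarrow> 0 \<le> G r"
  shows "(\<lambda>s. exp (- s) * G (t - s)) integrable_on {0..t}"
proof -
  have "mono_on {0..t} (\<lambda>s. G (t - s))"
    by (rule mono_onI) (auto intro!: monotone_onD[OF anti])
  then have "(\<lambda>s. G (t - s)) absolutely_integrable_on {0..t}"
    using nonneg by (intro nonnegative_absolutely_integrable_1 integrable_on_mono_on) auto
  then have "(\<lambda>s. exp (- s) * G (t - s)) absolutely_integrable_on {0..t}"
  proof (rule absolutely_integrable_bounded_measurable_product_real[rotated 3])
    show "(\<lambda>s. exp (- s)) \<in> borel_measurable (lebesgue_on {0..t})"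
      by (intro continuous_imp_measurable_on_sets_lebesgue continuous_intros) auto
    show "bounded ((\<lambda>s. exp (- s::real)) ` {0..t})"
      by (intro compact_imp_bounded compact_continuous_image continuous_intros) auto
  qed simp
  then show ?thesis
    using set_lebesgue_integral_eq_integral(1) by blast
qed

lemma argmax_Icc_eq_right:
  fixes h :: "real \<Rightarrow> real"
  assumes "a \<le> b" and lt: "\<And>y. a \<le> y \<Longrightarrow> y < b \<Longrightarrow> h y < h b"
  shows "{y \<in> {a..b}. h y = (SUP y\<in>{a..b}. h y)} = {b}"
proof -
  have le: "h y \<le> h b" if "y \<in> {a..b}" for y
    using lt[of y] that by (cases "y = b") auto
  have "(SUP y\<in>{a..b}. h y) = h b"
    using le \<open>a \<le> b\<close> by (intro cSup_eq_maximum) auto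
  moreover have "y = b" if "y \<in> {a..b}" "h y = h b" for y
    using lt[of y] that by (cases "y = b") auto
  ultimately show ?thesis
    using \<open>a \<le> b\<close> by auto
qed

lemma argmax_Icc_below_right:
  fixes h :: "real \<Rightarrow> real"
  assumes "continuous_on {a..b} h" and "y0 \<in> {a..b}" and "h b < h y0"
  shows "{y \<in> {a..b}. h y = (SUP y\<in>{a..b}. h y)} \<noteq> {} \<and>
         (\<forall>k \<in> {y \<in> {a..b}. h y = (SUP y\<in>{a..b}. h y)}. k < b)"
proof -
  obtain ym where ym: "ym \<in> {a..b}" "\<And>y. y \<in> {a..b} \<Longrightarrow> h y \<le> h ym"
    using continuous_attains_sup[OF compact_Icc _ assms(1)] assms(2) by auto
  have sup: "(SUP y\<in>{a..b}. h y) = h ym"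
    using ym by (intro cSup_eq_maximum) auto
  have "h b < h ym"
    using ym(2)[OF assms(2)] assms(3) by linarith
  then have "k < b" if "k \<in> {a..b}" "h k = h ym" for k
    using that by (cases "k = b") auto
  then show ?thesis
    using ym(1) sup by auto
qed

text \<open>Survival over remaining time \<open>t\<close> when enemies arrive at rate 1 and an encounter at
  remaining time \<open>r\<close> is survived (and play continues) with probability \<open>G r\<close>.\<close>
definition poisson_survival :: "(real \<Rightarrow> real) \<Rightarrow> real \<Rightarrow> real" where
  "poisson_survival G t = exp (- t) + integral {0..t} (\<lambda>s. exp (- s) * G (t - s))"

lemma poisson_survival_le_add:
  assumes "0 \<le> t" and "0 \<le> d"
    and int_G: "(\<lambda>s. exp (- s) * G (t - s)) integrable_on {0..t}"
    and int_F: "(\<lambda>s. exp (- s) * F (t - s)) integrable_on {0..t}"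
    and le: "\<And>r. 0 \<le> r \<Longrightarrow> r \<le> t \<Longrightarrow> G r \<le> F r + d"
  shows "poisson_survival G t \<le> poisson_survival F t + d"
proof -
  have hd: "((\<lambda>s. d * exp (- s)) has_integral d * (1 - exp (- t))) {0..t}"
    using has_integral_mult_right[OF has_integral_exp_neg[OF \<open>0 \<le> t\<close>]] by simp
  have "integral {0..t} (\<lambda>s. exp (- s) * G (t - s))
      \<le> integral {0..t} (\<lambda>s. exp (- s) * F (t - s) + d * exp (- s))"
  proof (rule integral_le[OF int_G integrable_add[OF int_F has_integral_integrable[OF hd]]])
    fix s assume "s \<in> {0..t}"
    then have "exp (- s) * G (t - s) \<le> exp (- s) * (F (t - s) + d)"
      using le by (intro mult_left_mono) auto
    then show "exp (- s) * G (t - s) \<le> exp (- s) * F (t - s) + d * exp (- s)"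
      by (simp add: algebra_simps)
  qed
  also have "\<dots> = integral {0..t} (\<lambda>s. exp (- s) * F (t - s)) + d * (1 - exp (- t))"
    using integral_add[OF int_F has_integral_integrable[OF hd]] integral_unique[OF hd] by simp
  also have "\<dots> \<le> integral {0..t} (\<lambda>s. exp (- s) * F (t - s)) + d"
    using \<open>0 \<le> d\<close> by (simp add: mult_left_le)
  finally show ?thesis
    by (simp add: poisson_survival_def)
qed

lemma poisson_survival_mono:
  assumes "0 \<le> t"
    and "(\<lambda>s. exp (- s) * G (t - s)) integrable_on {0..t}"
    and "(\<lambda>s. exp (- s) * F (t - s)) integrable_on {0..t}"
    and "\<And>r. 0 \<le> r \<Longrightarrow> r \<le> t \<Longrightarrow> G r \<le> F r"
  shows "poisson_survival G t \<le> poisson_survival F t"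
  using poisson_survival_le_add[of t 0 G F] assms by simp

lemma poisson_survival_cong:
  assumes "\<And>r. 0 \<le> r \<Longrightarrow> r \<le> t \<Longrightarrow> G r = F r"
  shows "poisson_survival G t = poisson_survival F t"
  unfolding poisson_survival_def
  using assms by (auto intro!: Henstock_Kurzweil_Integration.integral_cong)

lemma antimono_poisson_survival_integrable:
  fixes G :: "real \<Rightarrow> real"
  assumes "antimono_on {0..} G" and "\<And>r. 0 \<le> r \<Longrightarrow> 0 \<le> G r"
  shows "(\<lambda>s. exp (- s) * G (t - s)) integrable_on {0..t}"
proof (rule antimono_exp_neg_weighted_integrable)
  show "antimono_on {0..t} G"
    by (rule monotone_on_subset[OF assms(1)]) auto
qed (use assms(2) in auto)

lemma antimono_poisson_survival_bounds:
  assumes "antimono_on {0..} G" and G01: "\<And>r. 0 \<le> r \<Longrightarrow> 0 \<le> G r \<and> G r \<le> 1" and "0 \<le> t"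
  shows "0 \<le> poisson_survival G t \<and> poisson_survival G t \<le> 1"
proof -
  have int: "(\<lambda>s. exp (- s) * G (t - s)) integrable_on {0..t}"
    using assms by (intro antimono_poisson_survival_integrable) auto
  have "0 \<le> integral {0..t} (\<lambda>s. exp (- s) * G (t - s))"
    using G01 by (intro integral_nonneg[OF int]) auto
  moreover have "integral {0..t} (\<lambda>s. exp (- s) * G (t - s)) \<le> exp (- 0) - exp (- t)"
    using G01 \<open>0 \<le> t\<close> by (intro integral_exp_neg_weighted_le int) auto
  ultimately show ?thesis
    by (simp add: poisson_survival_def)
qed

lemma antimono_poisson_survival:
  assumes anti: "antimono_on {0..} G" and G01: "\<And>r. 0 \<le> r \<Longrightarrow> 0 \<le> G r \<and> G r \<le> 1"
  shows "antimono_on {0..} (poisson_survival G)"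
proof (rule monotone_onI)
  fix t t' :: real assume t: "t \<in> {0..}" "t' \<in> {0..}" "t \<le> t'"
  have int: "(\<lambda>s. exp (- s) * G (T - s)) integrable_on {0..T}" for T
    using assms by (intro antimono_poisson_survival_integrable) auto
  have split: "integral {0..t'} (\<lambda>s. exp (- s) * G (t' - s))
      = integral {0..t} (\<lambda>s. exp (- s) * G (t' - s)) + integral {t..t'} (\<lambda>s. exp (- s) * G (t' - s))"
    using t by (intro Henstock_Kurzweil_Integration.integral_combine[symmetric, OF _ _ int]) auto
  text \<open>On \<open>[0, t]\<close> the longer horizon only lowers \<open>G\<close>; the extra piece \<open>[t, t']\<close>
    is paid for by the drop of \<open>exp (- t)\<close>.\<close>
  have "integral {0..t} (\<lambda>s. exp (- s) * G (t' - s)) \<le> integral {0..t} (\<lambda>s. exp (- s) * G (t - s))"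
    using t by (intro integral_le int integrable_subinterval_real[OF int] mult_left_mono
        monotone_onD[OF anti]) auto
  moreover have "integral {t..t'} (\<lambda>s. exp (- s) * G (t' - s)) \<le> exp (- t) - exp (- t')"
    using t G01 by (intro integral_exp_neg_weighted_le integrable_subinterval_real[OF int]) auto
  ultimately show "poisson_survival G t' \<le> poisson_survival G t"
    unfolding poisson_survival_def split by linarith
qed

lemma poisson_survival_exp_neg_weighted:
  assumes "((\<lambda>s. F (t - s)) has_integral I) {0..t}"
  shows "((\<lambda>s. exp (- s) * (c * exp (- (t - s)) * F (t - s))) has_integral c * exp (- t) * I) {0..t}"
    and "poisson_survival (\<lambda>r. c * exp (- r) * F r) t = exp (- t) * (1 + c * I)"
proof -
  have "(\<lambda>s. exp (- s) * (c * exp (- (t - s)) * F (t - s))) = (\<lambda>s. c * exp (- t) * F (t - s))"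
    by (simp add: fun_eq_iff exp_diff exp_minus field_simps)
  then show hi: "((\<lambda>s. exp (- s) * (c * exp (- (t - s)) * F (t - s))) has_integral c * exp (- t) * I) {0..t}"
    using has_integral_mult_right[OF assms] by metis
  show "poisson_survival (\<lambda>r. c * exp (- r) * F r) t = exp (- t) * (1 + c * I)"
    unfolding poisson_survival_def integral_unique[OF hi] by (simp add: algebra_simps)
qed

text \<open>\<open>fire_value v (bomb_P v) = bomb_H v\<close>; the finite-horizon values use \<open>bomb_V v n\<close> for \<open>W\<close>.\<close>
definition fire_value :: "real \<Rightarrow> (real \<Rightarrow> real \<Rightarrow> real) \<Rightarrow> real \<Rightarrow> real \<Rightarrow> real" where
  "fire_value v W x t = (SUP y\<in>{0..x}. bomb_a v y * W (x - y) t)"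

lemma bomb_V_Suc_eq: "bomb_V v (Suc n) x = poisson_survival (fire_value v (bomb_V v n) x)"
  by (simp add: fun_eq_iff poisson_survival_def fire_value_def)

locale bomber =
  fixes v :: real
  assumes v_pos: "0 < v" and v_le_1: "v \<le> 1"
begin

lemma bomb_a_nonneg: "0 \<le> y \<Longrightarrow> 0 \<le> bomb_a v y"
  using v_pos v_le_1 mult_le_one[of v "exp (- y)"] by (simp add: bomb_a_def)

lemma bomb_a_le_1: "bomb_a v y \<le> 1"
  using v_pos by (simp add: bomb_a_def)

lemma bomb_a_0: "bomb_a v 0 = 1 - v"
  by (simp add: bomb_a_def)

lemma bomb_a_lipschitz:
  assumes "0 \<le> y'" "y' \<le> y"
  shows "bomb_a v y \<le> bomb_a v y' + (y - y')"
proof -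
  have "exp (- y') - exp (- y) = exp (- y') * (1 - exp (- (y - y')))"
    by (simp add: algebra_simps flip: exp_add)
  also have "\<dots> \<le> 1 - exp (- (y - y'))"
    using assms by (intro mult_left_le_one_le) auto
  also have "\<dots> \<le> y - y'"
    using exp_ge_add_one_self[of "- (y - y')"] by linarith
  finally have "exp (- y') - exp (- y) \<le> y - y'" .
  moreover have "v * (exp (- y') - exp (- y)) \<le> exp (- y') - exp (- y)"
    using assms v_pos v_le_1 by (intro mult_left_le_one_le) auto
  ultimately show ?thesis
    by (simp add: bomb_a_def algebra_simps)
qed

lemma fire_value_upper:
  assumes "\<And>w. 0 \<le> w \<Longrightarrow> W w t \<le> 1" and "0 \<le> y" "y \<le> x"
  shows "bomb_a v y * W (x - y) t \<le> fire_value v W x t"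
  unfolding fire_value_def
proof (rule cSUP_upper)
  show "bdd_above ((\<lambda>y. bomb_a v y * W (x - y) t) ` {0..x})"
  proof (rule bdd_aboveI2)
    fix y assume "y \<in> {0..x}"
    then show "bomb_a v y * W (x - y) t \<le> 1"
      using assms(1)[of "x - y"] bomb_a_nonneg[of y] bomb_a_le_1[of y]
      by (smt (verit) mult_left_le atLeastAtMost_iff mult_nonneg_nonpos)
  qed
qed (use assms in auto)

lemma fire_value_least:
  assumes "0 \<le> x" and "\<And>y. 0 \<le> y \<Longrightarrow> y \<le> x \<Longrightarrow> bomb_a v y * W (x - y) t \<le> M"
  shows "fire_value v W x t \<le> M"
  unfolding fire_value_def using assms by (intro cSUP_least) auto

lemma fire_value_0: "fire_value v W 0 t = (1 - v) * W 0 t"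
  by (simp add: fire_value_def bomb_a_0)

lemma fire_value_bounds:
  assumes "\<And>w. 0 \<le> w \<Longrightarrow> 0 \<le> W w t \<and> W w t \<le> 1" and "0 \<le> x"
  shows "0 \<le> fire_value v W x t \<and> fire_value v W x t \<le> 1"
proof
  have "0 \<le> bomb_a v x * W (x - x) t"
    using assms bomb_a_nonneg by simp
  also have "\<dots> \<le> fire_value v W x t"
    using assms by (intro fire_value_upper) auto
  finally show "0 \<le> fire_value v W x t" .
  show "fire_value v W x t \<le> 1"
    using assms bomb_a_nonneg bomb_a_le_1 by (intro fire_value_least mult_le_one) auto
qed

lemma fire_value_antimono:
  assumes bounds: "\<And>w s. 0 \<le> w \<Longrightarrow> 0 \<le> s \<Longrightarrow> 0 \<le> W w s \<and> W w s \<le> 1"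
    and anti: "\<And>w. 0 \<le> w \<Longrightarrow> antimono_on {0..} (W w)" and "0 \<le> x"
  shows "antimono_on {0..} (fire_value v W x)"
proof (rule monotone_onI)
  fix r r' :: real assume r: "r \<in> {0..}" "r' \<in> {0..}" "r \<le> r'"
  show "fire_value v W x r' \<le> fire_value v W x r"
  proof (rule fire_value_least[OF \<open>0 \<le> x\<close>])
    fix y assume y: "0 \<le> y" "y \<le> x"
    have "bomb_a v y * W (x - y) r' \<le> bomb_a v y * W (x - y) r"
      using y r bomb_a_nonneg by (intro mult_left_mono monotone_onD[OF anti]) auto
    also have "\<dots> \<le> fire_value v W x r"
      using y r bounds by (intro fire_value_upper) auto
    finally show "bomb_a v y * W (x - y) r' \<le> fire_value v W x r" .
  qed
qed

lemma fire_value_mono: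
  assumes bounds: "\<And>w. 0 \<le> w \<Longrightarrow> 0 \<le> W w t \<and> W w t \<le> 1"
    and mono: "\<And>w w'. 0 \<le> w \<Longrightarrow> w \<le> w' \<Longrightarrow> W w t \<le> W w' t"
    and "0 \<le> x" "x \<le> x'"
  shows "fire_value v W x t \<le> fire_value v W x' t"
proof (rule fire_value_least[OF \<open>0 \<le> x\<close>])
  fix y assume y: "0 \<le> y" "y \<le> x"
  have "bomb_a v y * W (x - y) t \<le> bomb_a v y * W (x' - y) t"
    using y assms bomb_a_nonneg by (intro mult_left_mono mono) auto
  also have "\<dots> \<le> fire_value v W x' t"
    using y assms by (intro fire_value_upper) auto
  finally show "bomb_a v y * W (x - y) t \<le> fire_value v W x' t" .
qed

lemma fire_value_lipschitz:
  assumes bounds: "\<And>w. 0 \<le> w \<Longrightarrow> 0 \<le> W w t \<and> W w t \<le> 1"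
    and lip: "\<And>w e. 0 \<le> w \<Longrightarrow> 0 \<le> e \<Longrightarrow> W (w + e) t \<le> W w t + e"
    and "0 \<le> x" "0 \<le> d"
  shows "fire_value v W (x + d) t \<le> fire_value v W x t + d"
proof (rule fire_value_least)
  show "0 \<le> x + d" using assms by simp
  fix y assume y: "0 \<le> y" "y \<le> x + d"
  show "bomb_a v y * W (x + d - y) t \<le> fire_value v W x t + d"
  proof (cases "d \<le> y")
    case True
    text \<open>Compare with firing \<open>y - d\<close> from \<open>x\<close>, which costs at most \<open>d\<close> in \<open>bomb_a\<close>.\<close>
    have W: "0 \<le> W (x - (y - d)) t" "W (x - (y - d)) t \<le> 1"
      using bounds y by auto
    have "bomb_a v y * W (x + d - y) t \<le> (bomb_a v (y - d) + d) * W (x - (y - d)) t"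
      using bomb_a_lipschitz[of "y - d" y] True W \<open>0 \<le> d\<close>
      by (subst diff_diff_eq2[symmetric]) (intro mult_right_mono, auto simp: algebra_simps)
    also have "\<dots> \<le> bomb_a v (y - d) * W (x - (y - d)) t + d"
      using W \<open>0 \<le> d\<close> by (simp add: distrib_right mult_left_le)
    also have "\<dots> \<le> fire_value v W x t + d"
      using True y bounds by (simp add: fire_value_upper)
    finally show ?thesis .
  next
    case False
    text \<open>Compare with firing nothing from \<open>x\<close>: the extra reserve \<open>d - y\<close> is worth at most
      \<open>d - y\<close>, and the shot \<open>y\<close> at most \<open>y\<close>.\<close>
    have W: "0 \<le> W x t" "W x t \<le> 1"
      using bounds assms by auto
    have a: "0 \<le> bomb_a v y" "bomb_a v y \<le> 1" "bomb_a v y \<le> bomb_a v 0 + y"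
      using bomb_a_nonneg bomb_a_le_1 bomb_a_lipschitz[of 0 y] y by auto
    have "bomb_a v y * W (x + d - y) t \<le> bomb_a v y * (W x t + (d - y))"
      using lip[of x "d - y"] a False assms by (intro mult_left_mono) (auto simp: algebra_simps)
    also have "\<dots> \<le> (bomb_a v 0 + y) * W x t + (d - y)"
      using a W False by (simp add: distrib_left) (intro add_mono mult_right_mono mult_left_le_one_le, auto)
    also have "\<dots> \<le> bomb_a v 0 * W (x - 0) t + d"
      using W y by (simp add: algebra_simps mult_left_le)
    also have "\<dots> \<le> fire_value v W x t + d"
      using assms fire_value_upper[of W t 0 x] by simp
    finally show ?thesis .
  qed
qed

lemma bomb_V_bounds_antimono:
  "(\<forall>x t. 0 \<le> x \<longrightarrow> 0 \<le> t \<longrightarrow> 0 \<le> bomb_V v n x t \<and> bomb_V v n x t \<le> 1) \<and>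
   (\<forall>x. 0 \<le> x \<longrightarrow> antimono_on {0..} (bomb_V v n x))"
proof (induction n)
  case 0
  show ?case by (auto intro!: monotone_onI)
next
  case (Suc n)
  have G01: "0 \<le> fire_value v (bomb_V v n) x r \<and> fire_value v (bomb_V v n) x r \<le> 1"
    if "0 \<le> x" "0 \<le> r" for x r
    using Suc.IH that by (intro fire_value_bounds) auto
  have anti: "antimono_on {0..} (fire_value v (bomb_V v n) x)" if "0 \<le> x" for x
    using Suc.IH that by (intro fire_value_antimono) auto
  show ?case
    unfolding bomb_V_Suc_eq
    using antimono_poisson_survival_bounds[OF anti G01] antimono_poisson_survival[OF anti G01]
    by blast
qed

lemma bomb_V_bounds: "0 \<le> x \<Longrightarrow> 0 \<le> t \<Longrightarrow> 0 \<le> bomb_V v n x t \<and> bomb_V v n x t \<le> 1"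
  using bomb_V_bounds_antimono by blast

lemma fire_value_bomb_V_integrable:
  "0 \<le> x \<Longrightarrow> (\<lambda>s. exp (- s) * fire_value v (bomb_V v n) x (t - s)) integrable_on {0..t}"
  using bomb_V_bounds_antimono bomb_V_bounds
  by (intro antimono_poisson_survival_integrable fire_value_antimono fire_value_bounds[THEN conjunct1])
    auto

lemma bomb_V_mono: "0 \<le> x \<Longrightarrow> x \<le> x' \<Longrightarrow> 0 \<le> t \<Longrightarrow> bomb_V v n x t \<le> bomb_V v n x' t"
proof (induction n arbitrary: x x' t)
  case (Suc n)
  then show ?case
    unfolding bomb_V_Suc_eq
    by (intro poisson_survival_mono fire_value_bomb_V_integrable fire_value_mono bomb_V_bounds) auto
qed simp

lemma bomb_V_lipschitz: "0 \<le> x \<Longrightarrow> 0 \<le> d \<Longrightarrow> 0 \<le> t \<Longrightarrow> bomb_V v n (x + d) t \<le> bomb_V v n x t + d"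
proof (induction n arbitrary: x d t)
  case (Suc n)
  then show ?case
    unfolding bomb_V_Suc_eq
    by (intro poisson_survival_le_add fire_value_bomb_V_integrable fire_value_lipschitz bomb_V_bounds)
      auto
qed simp

lemma bomb_P_ge_bomb_V: "0 \<le> x \<Longrightarrow> 0 \<le> t \<Longrightarrow> bomb_V v n x t \<le> bomb_P v x t"
  unfolding bomb_P_def using bomb_V_bounds by (intro cSUP_upper bdd_aboveI2[of _ _ 1]) auto

lemma bomb_P_le: "(\<And>n. bomb_V v n x t \<le> M) \<Longrightarrow> bomb_P v x t \<le> M"
  unfolding bomb_P_def by (intro cSUP_least) auto

lemma bomb_P_mono: "0 \<le> x \<Longrightarrow> x \<le> x' \<Longrightarrow> 0 \<le> t \<Longrightarrow> bomb_P v x t \<le> bomb_P v x' t"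
  by (rule bomb_P_le) (meson bomb_V_mono bomb_P_ge_bomb_V order_trans)

lemma bomb_P_lipschitz: "0 \<le> x \<Longrightarrow> 0 \<le> d \<Longrightarrow> 0 \<le> t \<Longrightarrow> bomb_P v (x + d) t \<le> bomb_P v x t + d"
  by (rule bomb_P_le) (use bomb_V_lipschitz bomb_P_ge_bomb_V in \<open>smt (verit)\<close>)

lemma continuous_on_bomb_P_remaining:
  assumes "0 \<le> t"
  shows "continuous_on {0..x} (\<lambda>y. bomb_P v (x - y) t)"
proof -
  have one_sided: "\<bar>bomb_P v (x - y) t - bomb_P v (x - y') t\<bar> \<le> y' - y"
    if "y \<in> {0..x}" "y' \<in> {0..x}" "y \<le> y'" for y y'
    using bomb_P_lipschitz[of "x - y'" "y' - y" t] bomb_P_mono[of "x - y'" "x - y" t] that assms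
    by auto
  have "dist (bomb_P v (x - y) t) (bomb_P v (x - y') t) \<le> 1 * dist y y'"
    if "y \<in> {0..x}" "y' \<in> {0..x}" for y y'
    using one_sided[of y y'] one_sided[of y' y] that
    by (cases "y \<le> y'") (auto simp: dist_real_def abs_minus_commute)
  then have "1-lipschitz_on {0..x} (\<lambda>y. bomb_P v (x - y) t)"
    by (intro lipschitz_onI) auto
  then show ?thesis
    by (rule lipschitz_on_continuous_on)
qed

definition exp_partial :: "nat \<Rightarrow> real \<Rightarrow> real" where
  "exp_partial n t = (\<Sum>k\<le>n. ((1 - v) * t) ^ k / fact k)"

definition exp_partial_integral :: "nat \<Rightarrow> real \<Rightarrow> real" where
  "exp_partial_integral n t = (\<Sum>k\<le>n. (1 - v) ^ k * t ^ (k + 1) / fact (k + 1))"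

lemma has_integral_exp_partial:
  assumes "0 \<le> t"
  shows "((\<lambda>s. exp_partial n (t - s)) has_integral exp_partial_integral n t) {0..t}"
  unfolding exp_partial_def exp_partial_integral_def
proof (intro has_integral_sum)
  fix k
  define F where "F s = - ((1 - v) ^ k * (t - s) ^ (k + 1) / fact (k + 1))" for s
  have "(F has_real_derivative ((1 - v) * (t - s)) ^ k / fact k) (at s within {0..t})" for s
  proof -
    have "(F has_real_derivative - ((1 - v) ^ k * (real (k + 1) * (t - s) ^ k * (0 - 1)) / fact (k + 1)))
        (at s within {0..t})"
      unfolding F_def by (intro derivative_eq_intros refl) auto
    moreover have "- ((1 - v) ^ k * (real (k + 1) * (t - s) ^ k * (0 - 1)) / fact (k + 1))
        = ((1 - v) * (t - s)) ^ k / fact k"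
      by (simp add: power_mult_distrib del: of_nat_Suc)
    ultimately show ?thesis by simp
  qed
  then have "((\<lambda>s. ((1 - v) * (t - s)) ^ k / fact k) has_integral (F t - F 0)) {0..t}"
    using assms
    by (intro fundamental_theorem_of_calculus) (auto simp: has_real_derivative_iff_has_vector_derivative)
  then show "((\<lambda>s. ((1 - v) * (t - s)) ^ k / fact k) has_integral (1 - v) ^ k * t ^ (k + 1) / fact (k + 1)) {0..t}"
    by (simp add: F_def)
qed auto

lemma exp_partial_Suc: "exp_partial (Suc n) t = 1 + (1 - v) * exp_partial_integral n t"
  unfolding exp_partial_def exp_partial_integral_def
  by (subst sum.atMost_Suc_shift) (simp add: sum_distrib_left power_mult_distrib mult_ac)

lemma bomb_V_0: "0 \<le> t \<Longrightarrow> bomb_V v n 0 t = exp (- t) * exp_partial n t"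
proof (induction n arbitrary: t)
  case 0
  then show ?case by (simp add: exp_partial_def)
next
  case (Suc n)
  have "bomb_V v (Suc n) 0 t = poisson_survival (\<lambda>r. (1 - v) * exp (- r) * exp_partial n r) t"
    unfolding bomb_V_Suc_eq using Suc.IH by (intro poisson_survival_cong) (simp add: fire_value_0)
  also have "\<dots> = exp (- t) * exp_partial (Suc n) t"
    using poisson_survival_exp_neg_weighted(2)[OF has_integral_exp_partial[OF Suc.prems]]
    by (simp add: exp_partial_Suc)
  finally show ?case .
qed

text \<open>The integral of \<open>exp ((1 - v) s)\<close> over \<open>[0, t]\<close>.\<close>
definition cum_exp :: "real \<Rightarrow> real" where
  "cum_exp t = (if v = 1 then t else (exp ((1 - v) * t) - 1) / (1 - v))"

lemma exp_eq_cum_exp: "exp ((1 - v) * t) = 1 + (1 - v) * cum_exp t"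
  by (simp add: cum_exp_def)

lemma cum_exp_0 [simp]: "cum_exp 0 = 0"
  by (simp add: cum_exp_def)

lemma cum_exp_mono: "s \<le> s' \<Longrightarrow> cum_exp s \<le> cum_exp s'"
  using v_le_1 by (auto simp: cum_exp_def divide_right_mono mult_left_mono)

lemma cum_exp_pos: "0 < s \<Longrightarrow> 0 < cum_exp s"
  using v_le_1 by (auto simp: cum_exp_def)

lemma cum_exp_nonneg: "0 \<le> s \<Longrightarrow> 0 \<le> cum_exp s"
  using cum_exp_mono[of 0 s] by simp

lemma exp_partial_tendsto: "(\<lambda>n. exp_partial n t) \<longlonglongrightarrow> exp ((1 - v) * t)"
proof -
  have "(\<lambda>n. \<Sum>i<Suc n. ((1 - v) * t) ^ i / fact i) \<longlonglongrightarrow> exp ((1 - v) * t)"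
    using LIMSEQ_Suc[OF exp_converges[of "(1 - v) * t", unfolded sums_def]]
    by (simp add: divide_inverse mult.commute)
  then show ?thesis
    by (simp only: lessThan_Suc_atMost exp_partial_def)
qed

lemma exp_partial_integral_tendsto: "(\<lambda>n. exp_partial_integral n t) \<longlonglongrightarrow> cum_exp t"
proof (cases "v = 1")
  case True
  then have "exp_partial_integral n t = t" for n
    unfolding exp_partial_integral_def by (induction n) simp_all
  moreover have "cum_exp t = t"
    unfolding cum_exp_def using True by simp
  ultimately show ?thesis
    by simp
next
  case False
  then have "exp_partial_integral n t = (exp_partial (Suc n) t - 1) / (1 - v)" for n
    by (simp add: exp_partial_Suc)
  moreover have "(\<lambda>n. (exp_partial (Suc n) t - 1) / (1 - v)) \<longlonglongrightarrow> (exp ((1 - v) * t) - 1) / (1 - v)"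
    using False by (intro tendsto_intros LIMSEQ_Suc[OF exp_partial_tendsto]) auto
  ultimately show ?thesis
    using False by (simp add: cum_exp_def)
qed

text \<open>Survival probability when all of \<open>x\<close> is fired at the first enemy.\<close>
definition fire_all_value :: "real \<Rightarrow> real \<Rightarrow> real" where
  "fire_all_value x t = exp (- t) * (1 + bomb_a v x * cum_exp t)"

lemma bomb_V_Suc_ge:
  assumes "0 \<le> x" "0 \<le> t"
  shows "exp (- t) * (1 + bomb_a v x * exp_partial_integral n t) \<le> bomb_V v (Suc n) x t"
proof -
  note explicit = poisson_survival_exp_neg_weighted[OF has_integral_exp_partial[OF \<open>0 \<le> t\<close>],
      of "bomb_a v x" n]
  have "exp (- t) * (1 + bomb_a v x * exp_partial_integral n t)
      = poisson_survival (\<lambda>r. bomb_a v x * exp (- r) * exp_partial n r) t"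
    using explicit(2) by simp
  also have "\<dots> \<le> bomb_V v (Suc n) x t"
    unfolding bomb_V_Suc_eq
  proof (rule poisson_survival_mono[OF \<open>0 \<le> t\<close> has_integral_integrable[OF explicit(1)]
        fire_value_bomb_V_integrable[OF \<open>0 \<le> x\<close>]])
    fix r assume "0 \<le> r" "r \<le> t"
    then show "bomb_a v x * exp (- r) * exp_partial n r \<le> fire_value v (bomb_V v n) x r"
      using fire_value_upper[of "bomb_V v n" r x x] bomb_V_bounds assms
      by (simp add: bomb_V_0 mult.assoc)
  qed
  finally show ?thesis .
qed

lemma fire_all_value_le_bomb_P:
  assumes "0 \<le> x" "0 \<le> t"
  shows "fire_all_value x t \<le> bomb_P v x t"
proof (rule LIMSEQ_le_const2)
  show "(\<lambda>n. exp (- t) * (1 + bomb_a v x * exp_partial_integral n t)) \<longlonglongrightarrow> fire_all_value x t"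
    unfolding fire_all_value_def by (intro tendsto_intros exp_partial_integral_tendsto)
  show "\<exists>N. \<forall>n\<ge>N. exp (- t) * (1 + bomb_a v x * exp_partial_integral n t) \<le> bomb_P v x t"
    using bomb_V_Suc_ge[OF assms] bomb_P_ge_bomb_V[OF assms] order_trans by blast
qed

definition fire_all_region :: "real \<Rightarrow> real \<Rightarrow> bool" where
  "fire_all_region x s \<longleftrightarrow> 0 \<le> x \<and> 0 \<le> s \<and> exp x * cum_exp s \<le> 1 + cum_exp s"

lemma fire_all_region_downward_closed:
  assumes "fire_all_region x s" "0 \<le> x'" "x' \<le> x" "0 \<le> s'" "s' \<le> s"
  shows "fire_all_region x' s'"
proof -
  have "cum_exp s' * (exp x' - 1) \<le> cum_exp s * (exp x - 1)"
    using assms by (intro mult_mono cum_exp_mono cum_exp_nonneg) (auto simp: fire_all_region_def)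
  also have "\<dots> \<le> 1"
    using assms by (simp add: fire_all_region_def algebra_simps)
  finally show ?thesis
    using assms by (simp add: fire_all_region_def algebra_simps)
qed

lemma fire_all_value_split_diff:
  "bomb_a v y * fire_all_value (x - y) s - bomb_a v x * fire_all_value 0 s
     = exp (- s) * v * (exp (- y) - exp (- x)) * (cum_exp s * exp y - 1 - cum_exp s)"
proof -
  define p q e R where "p = exp (- y)" and "q = exp (- x)" and "e = exp y" and "R = cum_exp s"
  have pe: "p * e = 1"
    by (simp add: p_def e_def flip: exp_add)
  have "exp (- (x - y)) = q * e"
    by (simp add: q_def e_def flip: exp_add)
  then have "bomb_a v y * fire_all_value (x - y) s - bomb_a v x * fire_all_value 0 s
      = exp (- s) * ((1 - v * p) * (1 + (1 - v * (q * e)) * R) - (1 - v * q) * (1 + (1 - v) * R))"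
    by (simp add: fire_all_value_def bomb_a_def p_def q_def R_def algebra_simps)
  also have "\<dots> = exp (- s) * v * (p - q) * (R * e - 1 - R) + exp (- s) * v * R * (1 - p * e) * (1 - v * q)"
    by algebra
  text \<open>The second summand vanishes since \<open>p * e = 1\<close>.\<close>
  finally show ?thesis
    using pe by (simp add: p_def q_def e_def R_def)
qed

lemma fire_all_beats_split:
  assumes "fire_all_region x s" "0 \<le> y" "y \<le> x"
  shows "bomb_a v y * fire_all_value (x - y) s \<le> bomb_a v x * fire_all_value 0 s"
proof -
  have "0 \<le> exp (- s) * v * (exp (- y) - exp (- x))"
    using assms v_pos by simp
  moreover have "cum_exp s * exp y \<le> cum_exp s * exp x"
    using assms cum_exp_nonneg by (intro mult_left_mono) (auto simp: fire_all_region_def)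
  then have "cum_exp s * exp y - 1 - cum_exp s \<le> 0"
    using assms by (simp add: fire_all_region_def mult.commute)
  ultimately have "exp (- s) * v * (exp (- y) - exp (- x)) * (cum_exp s * exp y - 1 - cum_exp s) \<le> 0"
    by (rule mult_nonneg_nonpos)
  then show ?thesis
    using fire_all_value_split_diff[of y x s] by linarith
qed

lemma fire_all_beats_split_strict:
  assumes "fire_all_region x s" "0 < s" "0 \<le> y" "y < x"
  shows "bomb_a v y * fire_all_value (x - y) s < bomb_a v x * fire_all_value 0 s"
proof -
  have "0 < exp (- s) * v * (exp (- y) - exp (- x))"
    using assms v_pos by simp
  moreover have "cum_exp s * exp y < cum_exp s * exp x"
    using assms cum_exp_pos by (intro mult_strict_left_mono) auto
  then have "cum_exp s * exp y - 1 - cum_exp s < 0"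
    using assms by (simp add: fire_all_region_def mult.commute)
  ultimately have "exp (- s) * v * (exp (- y) - exp (- x)) * (cum_exp s * exp y - 1 - cum_exp s) < 0"
    by (rule mult_pos_neg)
  then show ?thesis
    using fire_all_value_split_diff[of y x s] by linarith
qed

lemma split_beats_fire_all:
  assumes "0 < s" "0 < x" "1 + cum_exp s < exp x * cum_exp s"
  obtains y where "0 < y" "y < x" "bomb_a v x * fire_all_value 0 s < bomb_a v y * fire_all_value (x - y) s"
proof
  define c where "c = ln (1 + 1 / cum_exp s)"
  define y where "y = (c + x) / 2"
  text \<open>\<open>c\<close> is the threshold \<open>f\<^sub>u(s)\<close>; any \<open>y\<close> strictly between \<open>c\<close> and \<open>x\<close> does better.\<close>
  have R: "0 < cum_exp s"
    using cum_exp_pos assms by simp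
  have exp_c: "exp c = 1 + 1 / cum_exp s"
    using R by (simp add: c_def add_pos_pos)
  have "0 < c"
    using R by (auto simp: c_def intro!: ln_gt_zero)
  moreover have "exp c < exp x"
    using R assms(3) by (simp add: exp_c field_simps)
  then have "c < x"
    by simp
  ultimately show "0 < y" "y < x"
    by (simp_all add: y_def)
  have "exp c < exp y"
    using \<open>c < x\<close> by (simp add: y_def)
  then have "0 < cum_exp s * exp y - 1 - cum_exp s"
    using R by (simp add: exp_c field_simps)
  moreover have "0 < exp (- s) * v * (exp (- y) - exp (- x))"
    using \<open>y < x\<close> v_pos by simp
  ultimately have "0 < exp (- s) * v * (exp (- y) - exp (- x)) * (cum_exp s * exp y - 1 - cum_exp s)"
    by simp
  then show "bomb_a v x * fire_all_value 0 s < bomb_a v y * fire_all_value (x - y) s"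
    using fire_all_value_split_diff[of y x s] by linarith
qed

lemma has_integral_exp_cum_exp:
  assumes "0 \<le> s"
  shows "((\<lambda>\<sigma>. exp ((1 - v) * (s - \<sigma>))) has_integral cum_exp s) {0..s}"
proof (cases "v = 1")
  case True
  have "cum_exp s = s"
    unfolding cum_exp_def using True by simp
  moreover have "(\<lambda>\<sigma>. exp ((1 - v) * (s - \<sigma>))) = (\<lambda>\<sigma>. 1)"
    using True by simp
  ultimately show ?thesis
    using has_integral_const_real[of "1::real" 0 s] assms by simp
next
  case False
  then have nz: "1 - v \<noteq> 0"
    by simp
  define F where "F \<sigma> = - exp ((1 - v) * (s - \<sigma>)) / (1 - v)" for \<sigma>
  have "(F has_real_derivative exp ((1 - v) * (s - \<sigma>))) (at \<sigma> within {0..s})" for \<sigma>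
  proof -
    have "(F has_real_derivative - (exp ((1 - v) * (s - \<sigma>)) * ((1 - v) * (0 - 1))) / (1 - v))
        (at \<sigma> within {0..s})"
      unfolding F_def using nz by (intro derivative_eq_intros refl) auto
    moreover have "- (e * ((1 - v) * (0 - 1))) / (1 - v) = e" for e
      using nz by (simp add: field_simps)
    ultimately show ?thesis
      by simp
  qed
  then have "((\<lambda>\<sigma>. exp ((1 - v) * (s - \<sigma>))) has_integral (F s - F 0)) {0..s}"
    using assms
    by (intro fundamental_theorem_of_calculus) (auto simp: has_real_derivative_iff_has_vector_derivative)
  then show ?thesis
    using False by (simp add: F_def cum_exp_def diff_divide_distrib)
qed

lemma bomb_V_le_fire_all_value: "fire_all_region x s \<Longrightarrow> bomb_V v n x s \<le> fire_all_value x s"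
proof (induction n arbitrary: x s)
  case 0
  then show ?case
    using bomb_a_nonneg cum_exp_nonneg by (simp add: fire_all_value_def fire_all_region_def)
next
  case (Suc n)
  have x: "0 \<le> x" and s: "0 \<le> s"
    using Suc.prems by (auto simp: fire_all_region_def)
  note explicit = poisson_survival_exp_neg_weighted[OF has_integral_exp_cum_exp[OF s], of "bomb_a v x"]
  have "bomb_V v (Suc n) x s \<le> poisson_survival (\<lambda>r. bomb_a v x * exp (- r) * exp ((1 - v) * r)) s"
    unfolding bomb_V_Suc_eq
  proof (rule poisson_survival_mono[OF s fire_value_bomb_V_integrable[OF x]
        has_integral_integrable[OF explicit(1)]])
    fix r assume r: "0 \<le> r" "r \<le> s"
    have region: "fire_all_region x r"
      using fire_all_region_downward_closed[OF Suc.prems] x r by auto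
    have "fire_value v (bomb_V v n) x r \<le> bomb_a v x * fire_all_value 0 r"
    proof (rule fire_value_least[OF x])
      fix y assume y: "0 \<le> y" "y \<le> x"
      have "bomb_V v n (x - y) r \<le> fire_all_value (x - y) r"
        using fire_all_region_downward_closed[OF region] y r by (intro Suc.IH) auto
      then have "bomb_a v y * bomb_V v n (x - y) r \<le> bomb_a v y * fire_all_value (x - y) r"
        using y bomb_a_nonneg by (intro mult_left_mono) auto
      also have "\<dots> \<le> bomb_a v x * fire_all_value 0 r"
        using fire_all_beats_split[OF region y] .
      finally show "bomb_a v y * bomb_V v n (x - y) r \<le> bomb_a v x * fire_all_value 0 r" .
    qed
    then show "fire_value v (bomb_V v n) x r \<le> bomb_a v x * exp (- r) * exp ((1 - v) * r)"
      by (simp add: fire_all_value_def bomb_a_0 exp_eq_cum_exp mult.assoc)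
  qed
  then show ?case
    using explicit(2) by (simp add: fire_all_value_def)
qed

lemma bomb_P_le_fire_all_value: "fire_all_region x s \<Longrightarrow> bomb_P v x s \<le> fire_all_value x s"
  by (rule bomb_P_le) (rule bomb_V_le_fire_all_value)

lemma bomb_P_0: "0 \<le> t \<Longrightarrow> bomb_P v 0 t = fire_all_value 0 t"
  using bomb_P_le_fire_all_value[of 0 t] fire_all_value_le_bomb_P[of 0 t] cum_exp_nonneg[of t]
  by (simp add: fire_all_region_def)

lemma bomb_K_eq:
  "bomb_K v x t = {y \<in> {0..x}. bomb_a v y * bomb_P v (x - y) t =
     (SUP y\<in>{0..x}. bomb_a v y * bomb_P v (x - y) t)}"
  by (simp add: bomb_K_def bomb_H_def)

lemma bomb_K_fire_all:
  assumes "0 < t" "0 < x" "fire_all_region x t"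
  shows "bomb_K v x t = {x}"
  unfolding bomb_K_eq
proof (rule argmax_Icc_eq_right)
  fix y assume y: "0 \<le> y" "y < x"
  have "bomb_a v y * bomb_P v (x - y) t \<le> bomb_a v y * fire_all_value (x - y) t"
    using fire_all_region_downward_closed[OF assms(3)] y assms
    by (intro mult_left_mono bomb_P_le_fire_all_value bomb_a_nonneg) auto
  also have "\<dots> < bomb_a v x * fire_all_value 0 t"
    using fire_all_beats_split_strict[OF assms(3,1)] y by simp
  finally show "bomb_a v y * bomb_P v (x - y) t < bomb_a v x * bomb_P v (x - x) t"
    using bomb_P_0 assms by simp
qed (use assms in simp)

lemma bomb_K_fire_less:
  assumes "0 < t" "0 < x" "1 + cum_exp t < exp x * cum_exp t"
  shows "bomb_K v x t \<noteq> {} \<and> (\<forall>k \<in> bomb_K v x t. k < x)"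
proof -
  obtain y where y: "0 < y" "y < x" and better:
    "bomb_a v x * fire_all_value 0 t < bomb_a v y * fire_all_value (x - y) t"
    using split_beats_fire_all[OF assms] .
  have "bomb_a v x * bomb_P v (x - x) t < bomb_a v y * bomb_P v (x - y) t"
    using better fire_all_value_le_bomb_P[of "x - y" t] bomb_a_nonneg[of y] y assms bomb_P_0
    by (smt (verit) mult_left_mono)
  moreover have "continuous_on {0..x} (\<lambda>y. bomb_a v y * bomb_P v (x - y) t)"
    unfolding bomb_a_def using assms continuous_on_bomb_P_remaining by (intro continuous_intros) auto
  ultimately show ?thesis
    unfolding bomb_K_eq using y by (intro argmax_Icc_below_right) auto
qed

lemma bomb_f_eq: "0 < t \<Longrightarrow> bomb_f (1 - v) t = ln (1 + 1 / cum_exp t)"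
  by (auto simp: bomb_f_def cum_exp_def mult.commute)

lemma le_bomb_f_iff:
  assumes "0 < t"
  shows "x \<le> bomb_f (1 - v) t \<longleftrightarrow> exp x * cum_exp t \<le> 1 + cum_exp t"
proof -
  have R: "0 < cum_exp t"
    using cum_exp_pos assms by simp
  then have "x \<le> bomb_f (1 - v) t \<longleftrightarrow> exp x \<le> 1 + 1 / cum_exp t"
    unfolding bomb_f_eq[OF assms] by (intro ln_ge_iff) (simp add: add_pos_pos)
  also have "\<dots> \<longleftrightarrow> exp x * cum_exp t \<le> 1 + cum_exp t"
    using R by (simp add: field_simps)
  finally show ?thesis .
qed

lemma bomb_g_le_bomb_f:
  assumes "0 < t" and "v < 1"
  shows "bomb_g (1 - v) t \<le> bomb_f (1 - v) t"
proof -
  define u where "u = 1 - v"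
  define w where "w = u * t"
  have "0 < u" "0 < w"
    using assms by (simp_all add: u_def w_def)
  have "(1 - w) * exp w \<le> exp (- w) * exp w"
    using exp_ge_add_one_self[of "- w"] by (intro mult_right_mono) auto
  then have exp_bound: "(1 - w) * exp w \<le> 1"
    by (simp flip: exp_add)
  have "(1 / t - u) * (exp w - 1) = ((1 - w) * (exp w - 1)) / t"
    using assms by (simp add: w_def field_simps)
  also have "\<dots> \<le> w / t"
    using exp_bound assms by (intro divide_right_mono) (auto simp: algebra_simps)
  also have "\<dots> = u"
    using assms by (simp add: w_def)
  finally have "1 / t - u \<le> u / (exp w - 1)"
    using \<open>0 < w\<close> by (simp add: field_simps)
  moreover have "0 < 1 + 1 / t - u"
    using assms v_pos by (simp add: u_def add_pos_pos)
  ultimately show ?thesis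
    using \<open>0 < u\<close> by (simp add: bomb_g_def bomb_f_def u_def [symmetric] w_def mult.commute)
qed

end

theorem theorem1:
  fixes v t :: real
  assumes "0 < v" and "v \<le> 1" and "0 < t"
  defines "u \<equiv> 1 - v"
  shows "((u = 0 \<or> (0 < u \<and> u < 1/2 \<and> t \<ge> ln (2 * v) / u) \<or> (1/2 \<le> u \<and> u < 1)) \<longrightarrow>
           (\<forall>x > 0. (x \<le> bomb_f u t \<longrightarrow> bomb_K v x t = {x}) \<and>
                    (x > bomb_f u t \<longrightarrow> bomb_K v x t \<noteq> {} \<and> (\<forall>k \<in> bomb_K v x t. k < x)))) \<and>
         ((0 < u \<and> u < 1/2 \<and> t < ln (2 * v) / u) \<longrightarrow>
           (\<forall>x > 0. (x \<le> bomb_g u t \<longrightarrow> bomb_K v x t = {x}) \<and>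
                    (x > bomb_f u t \<longrightarrow> bomb_K v x t \<noteq> {} \<and> (\<forall>k \<in> bomb_K v x t. k < x))))"
proof -
  interpret bomber v
    using assms by unfold_locales
  have below: "bomb_K v x t = {x}" if "0 < x" "x \<le> bomb_f u t" for x
    using bomb_K_fire_all[OF \<open>0 < t\<close> that(1)] that le_bomb_f_iff[OF \<open>0 < t\<close>] \<open>0 < t\<close>
    by (simp add: u_def fire_all_region_def)
  have above: "bomb_K v x t \<noteq> {} \<and> (\<forall>k \<in> bomb_K v x t. k < x)" if "0 < x" "bomb_f u t < x" for x
    using bomb_K_fire_less[OF \<open>0 < t\<close> that(1)] that le_bomb_f_iff[OF \<open>0 < t\<close>, of x]
    by (simp add: u_def not_le)
  have "bomb_g u t \<le> bomb_f u t" if "0 < u"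
    using bomb_g_le_bomb_f[OF \<open>0 < t\<close>] that by (simp add: u_def)
  then show ?thesis
    using below above by (meson order_trans)
qed

end
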